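(* Let $T$ be a decomposition tree of a distance-hereditary graph $G$, and let $v$ be an internal node of $T$ labeled $\otimes$ with left child $v_l$ and right child $v_r$, such that property (P) holds at $v_l$ and at $v_r$. Then $\hat\gamma_0(v)=\min\{\hat\gamma_i(v_l)+\hat\gamma_i(v_r) : 0\le i\le \min\{|\hat{TS}(v_l)|,|\hat{TS}(v_r)|\}\}$.
   Context: All graphs are finite, simple, undirected. For a graph $H$ and $S\subseteq V(H)$, $N_H[S]$ is $S$ together with all vertices adjacent to a vertex of $S$, and $H[S]$ is the induced subgraph. Graphs carry a "twin set": a single-vertex graph on $x$ has twin set $\{x\}$. For vertex-disjoint graphs $G_l,G_r$ with twin sets $TS(G_l),TS(G_r)$: the true twin operation $G_l\otimes G_r$ has vertex set $V(G_l)\cup V(G_r)$, edge set $E(G_l)\cup E(G_r)\cup\{uw: u\in TS(G_l), w\in TS(G_r)\}$ and twin set $TS(G_l)\cup TS(G_r)$; the false twin operation $G_l\odot G_r$ has vertex set $V(G_l)\cup V(G_r)$, edge set $E(G_l)\cup E(G_r)$, twin set $TS(G_l)\cup TS(G_r)$; the attachment operation $G_l\oplus G_r$ has the same vertex and edge sets as $G_l\otimes G_r$ and twin set $TS(G_l)$. A decomposition tree $T$ of $G$ is a rooted binary tree whose leaves are in bijection with $V(G)$, each internal node having a left and a right child and a label in $\{\otimes,\odot,\oplus\}$; for each node $v$ define $\hat G(v)$ and $\hat{TS}(v)$ recursively: for a leaf $x$, the single-vertex graph on $x$ with twin set $\{x\}$; for an internal node $v$ with label $\circ$ and children $v_l,v_r$,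 $\hat G(v)=\hat G(v_l)\circ\hat G(v_r)$ with the corresponding twin set; one requires $\hat G(\text{root})=G$. Then $\hat G(v)$ is the subgraph of $G$ induced by the set $\hat V(v)$ of leaves below $v$. For a node $u$ and $0\le k\le|\hat{TS}(u)|$, call $S\subseteq\hat V(u)$ $k$-feasible if $\hat V(u)\setminus\hat{TS}(u)\subseteq N_{\hat G(u)}[S]$ and there is $X\subseteq S\cap\hat{TS}(u)$ with $|X|=k$ such that $\hat G(u)[S\setminus X]$ has a perfect matching. $\hat\gamma_k(u)$ is the minimum size of a $k$-feasible set. $\hat{min}(u)=\min\{\hat\gamma_k(u):0\le k\le|\hat{TS}(u)|\}$, and $\hat\alpha(u)$, $\hat\beta(u)$ are the smallest and the largest $k$ with $\hat\gamma_k(u)=\hat{min}(u)$. Property (P) holds at $u$ if for every $0\le k\le|\hat{TS}(u)|$: $\hat\gamma_k(u)=\hat{min}(u)+\hat\alpha(u)-k$ when $k\le\hat\alpha(u)$; $\hat\gamma_k(u)=\hat{min}(u)+k-\hat\beta(u)$ when $k\ge\hat\beta(u)$; $\hat\gamma_k(u)=\hat{min}(u)$ when $\hat\alpha(u)<k<\hat\beta(u)$ and $k-\hat\alpha(u)$ is even; and $\hat\gamma_k(u)=\hat{min}(u)+1$ otherwise. *)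

theory Defs
  imports "HOL-Library.Extended_Nat"
begin

definition induced_edges :: "'a set set \<Rightarrow> 'a set \<Rightarrow> 'a set set" where
  "induced_edges E S = {e \<in> E. e \<subseteq> S}"

definition closed_nbhd :: "'a set set \<Rightarrow> 'a set \<Rightarrow> 'a set" where
  "closed_nbhd E S = S \<union> {x. \<exists>y\<in>S. {x, y} \<in> E}"

definition has_perfect_matching :: "'a set \<Rightarrow> 'a set set \<Rightarrow> bool" where
  "has_perfect_matching V E \<longleftrightarrow>
     (\<exists>M \<subseteq> E. (\<forall>e\<in>M. e \<subseteq> V) \<and> (\<forall>e1\<in>M. \<forall>e2\<in>M. e1 \<noteq> e2 \<longrightarrow> e1 \<inter> e2 = {}) \<and> \<Union>M = V)"

definition is_walk :: "'a set \<Rightarrow> 'a set set \<Rightarrow> 'a list \<Rightarrow> bool" where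
  "is_walk V E xs \<longleftrightarrow> xs \<noteq> [] \<and> set xs \<subseteq> V \<and>
     (\<forall>i. Suc i < length xs \<longrightarrow> {xs ! i, xs ! Suc i} \<in> E)"

definition connected_graph :: "'a set \<Rightarrow> 'a set set \<Rightarrow> bool" where
  "connected_graph V E \<longleftrightarrow>
     (\<forall>u\<in>V. \<forall>w\<in>V. \<exists>xs. is_walk V E xs \<and> hd xs = u \<and> last xs = w)"

definition graph_dist :: "'a set \<Rightarrow> 'a set set \<Rightarrow> 'a \<Rightarrow> 'a \<Rightarrow> nat" where
  "graph_dist V E u w =
     (LEAST n. \<exists>xs. is_walk V E xs \<and> hd xs = u \<and> last xs = w \<and> length xs = Suc n)"

definition distance_hereditary :: "'a set \<Rightarrow> 'a set set \<Rightarrow> bool" where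
  "distance_hereditary V E \<longleftrightarrow>
     (\<forall>U \<subseteq> V. connected_graph U (induced_edges E U) \<longrightarrow>
        (\<forall>u\<in>U. \<forall>w\<in>U. graph_dist U (induced_edges E U) u w = graph_dist V E u w))"

datatype op = TrueTwin | FalseTwin | Attach

datatype 'a dtree = Leaf 'a | Node op "'a dtree" "'a dtree"

fun dverts :: "'a dtree \<Rightarrow> 'a set" where
  "dverts (Leaf x) = {x}"
| "dverts (Node _ l r) = dverts l \<union> dverts r"

fun dts :: "'a dtree \<Rightarrow> 'a set" where
  "dts (Leaf x) = {x}"
| "dts (Node TrueTwin l r) = dts l \<union> dts r"
| "dts (Node FalseTwin l r) = dts l \<union> dts r"
| "dts (Node Attach l r) = dts l"

fun dedges :: "'a dtree \<Rightarrow> 'a set set" where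
  "dedges (Leaf x) = {}"
| "dedges (Node FalseTwin l r) = dedges l \<union> dedges r"
| "dedges (Node _ l r) = dedges l \<union> dedges r \<union> {{u, w} |u w. u \<in> dts l \<and> w \<in> dts r}"

text \<open>Leaves are in bijection with the vertices: the leaf labels of the two
  children of every internal node are disjoint.\<close>
fun wf_dtree :: "'a dtree \<Rightarrow> bool" where
  "wf_dtree (Leaf x) = True"
| "wf_dtree (Node _ l r) = (wf_dtree l \<and> wf_dtree r \<and> dverts l \<inter> dverts r = {})"

fun subtrees :: "'a dtree \<Rightarrow> 'a dtree set" where
  "subtrees (Leaf x) = {Leaf x}"
| "subtrees (Node c l r) = insert (Node c l r) (subtrees l \<union> subtrees r)"

definition is_decomposition_tree :: "'a dtree \<Rightarrow> 'a set \<Rightarrow> 'a set set \<Rightarrow> bool" where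
  "is_decomposition_tree T V E \<longleftrightarrow> wf_dtree T \<and> dverts T = V \<and> dedges T = E"

definition k_feasible :: "nat \<Rightarrow> 'a dtree \<Rightarrow> 'a set \<Rightarrow> bool" where
  "k_feasible k u S \<longleftrightarrow> S \<subseteq> dverts u \<and>
     dverts u - dts u \<subseteq> closed_nbhd (dedges u) S \<and>
     (\<exists>X \<subseteq> S \<inter> dts u. card X = k \<and>
        has_perfect_matching (S - X) (induced_edges (dedges u) (S - X)))"

text \<open>Minimum size of a k-feasible set; infinity if none exists.\<close>
definition gamma :: "nat \<Rightarrow> 'a dtree \<Rightarrow> enat" where
  "gamma k u = (INF S \<in> {S. k_feasible k u S}. enat (card S))"

definition gmin :: "'a dtree \<Rightarrow> enat" where
  "gmin u = (MIN k \<in> {0..card (dts u)}. gamma k u)"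

definition galpha :: "'a dtree \<Rightarrow> nat" where
  "galpha u = (LEAST k. k \<le> card (dts u) \<and> gamma k u = gmin u)"

definition gbeta :: "'a dtree \<Rightarrow> nat" where
  "gbeta u = (GREATEST k. k \<le> card (dts u) \<and> gamma k u = gmin u)"

definition property_P :: "'a dtree \<Rightarrow> bool" where
  "property_P u \<longleftrightarrow> (\<forall>k \<le> card (dts u).
     (k \<le> galpha u \<longrightarrow> gamma k u = gmin u + enat (galpha u - k)) \<and>
     (k \<ge> gbeta u \<longrightarrow> gamma k u = gmin u + enat (k - gbeta u)) \<and>
     (galpha u < k \<and> k < gbeta u \<and> even (k - galpha u) \<longrightarrow> gamma k u = gmin u) \<and>
     (galpha u < k \<and> k < gbeta u \<and> odd (k - galpha u) \<longrightarrow> gamma k u = gmin u + 1))"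

end

theory Submission
  imports Defs "HOL-Library.Disjoint_Sets"
begin

text \<open>At a true twin node the only edges between the two sides join the twin sets.
  Hence a perfect matching of a 0-feasible set \<open>S\<close> splits into perfect matchings of the
  two sides together with \<open>i\<close> crossing edges, whose endpoints form sets \<open>X\<close> of size \<open>i\<close>
  in the twin sets of both sides; conversely, two \<open>i\<close>-feasible sets of the children are
  glued by matching their sets \<open>X\<close> bijectively.  Domination of non-twin vertices is local
  to each side, since crossing edges only touch twin vertices.\<close>

lemma has_perfect_matching_induced_iff:
  "has_perfect_matching S (induced_edges E S) \<longleftrightarrow> (\<exists>M \<subseteq> E. disjoint M \<and> \<Union>M = S)"
proof
  assume "has_perfect_matching S (induced_edges E S)"
  then obtain M where "M \<subseteq> induced_edges E S" "\<forall>e1\<in>M. \<forall>e2\<in>M. e1 \<noteq> e2 \<longrightarrow> e1 \<inter> e2 = {}"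
    "\<Union>M = S"
    unfolding has_perfect_matching_def by blast
  then show "\<exists>M \<subseteq> E. disjoint M \<and> \<Union>M = S"
    unfolding induced_edges_def disjoint_def by blast
next
  assume "\<exists>M \<subseteq> E. disjoint M \<and> \<Union>M = S"
  then obtain M where "M \<subseteq> E" "disjoint M" "\<Union>M = S" by blast
  then show "has_perfect_matching S (induced_edges E S)"
    unfolding has_perfect_matching_def induced_edges_def
    by (intro exI[of _ M]) (auto simp: disjoint_def)
qed

lemma Union_matching_Int_Pow:
  assumes "disjoint M" "\<Union>M = S"
  shows "\<Union>(M \<inter> Pow A) = S \<inter> A - \<Union>(M - Pow A)"
proof -
  have "\<Union>(M \<inter> Pow A) = S - \<Union>(M - Pow A)"
    using diff_Union_pairwise_disjoint[OF assms(1), of "M - Pow A"] assms(2)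
    by (simp add: Diff_Diff_Int Int_commute)
  then show ?thesis by blast
qed

lemma card_Union_Int_eq_card:
  assumes "finite C" "disjoint C" "\<And>e. e \<in> C \<Longrightarrow> card (e \<inter> A) = 1"
  shows "card (\<Union>C \<inter> A) = card C"
proof -
  have "card (\<Union>C \<inter> A) = card (\<Union>e\<in>C. e \<inter> A)"
    by (simp only: Int_Union2)
  also have "\<dots> = (\<Sum>e\<in>C. card (e \<inter> A))"
  proof (rule card_UN_disjoint)
    show "\<forall>e\<in>C. finite (e \<inter> A)"
      using assms(3) by (intro ballI card_ge_0_finite) simp
    show "\<forall>e\<in>C. \<forall>e'\<in>C. e \<noteq> e' \<longrightarrow> e \<inter> A \<inter> (e' \<inter> A) = {}"
      using assms(2) unfolding disjoint_def by blast
  qed (rule assms(1))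
  also have "\<dots> = card C"
    using assms(3) by simp
  finally show ?thesis .
qed

lemma disjoint_pairs_bij_betw:
  assumes "bij_betw f X Y" "X \<inter> Y = {}"
  shows "disjoint ((\<lambda>x. {x, f x}) ` X)" "\<Union>((\<lambda>x. {x, f x}) ` X) = X \<union> Y"
  using assms unfolding disjoint_def bij_betw_def inj_on_def by auto

lemma wf_dtree_subtree: "t \<in> subtrees T \<Longrightarrow> wf_dtree T \<Longrightarrow> wf_dtree t"
  by (induction T) auto

lemma finite_dverts: "finite (dverts t)"
  by (induction t) auto

lemma dts_subset_dverts: "dts t \<subseteq> dverts t"
  by (induction t rule: dts.induct) auto

lemma finite_dts: "finite (dts t)"
  using dts_subset_dverts finite_dverts by (rule finite_subset)

lemma dedges_subset_dverts: "e \<in> dedges t \<Longrightarrow> e \<subseteq> dverts t"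
  by (induction t arbitrary: e rule: dedges.induct) (use dts_subset_dverts in fastforce)+

lemma empty_notin_dedges: "{} \<notin> dedges t"
  by (induction t rule: dedges.induct) auto

lemma TrueTwin_swap:
  "dedges (Node TrueTwin l r) = dedges (Node TrueTwin r l)"
  "dts (Node TrueTwin l r) = dts (Node TrueTwin r l)"
  "dverts (Node TrueTwin l r) = dverts (Node TrueTwin r l)"
  "wf_dtree (Node TrueTwin l r) = wf_dtree (Node TrueTwin r l)"
  by (auto simp: insert_commute)

lemma dedges_TrueTwinE:
  assumes "e \<in> dedges (Node TrueTwin l r)"
  obtains "e \<in> dedges l" | "e \<in> dedges r" | u w where "e = {u, w}" "u \<in> dts l" "w \<in> dts r"
  using assms by auto

lemma dedges_TrueTwin_inside_left:
  assumes "wf_dtree (Node TrueTwin l r)" "e \<in> dedges (Node TrueTwin l r)" "e \<subseteq> dverts l"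
  shows "e \<in> dedges l"
  using assms(2)
proof (cases rule: dedges_TrueTwinE)
  case 2
  then have "e = {}" using assms dedges_subset_dverts[of e r] by auto
  then show ?thesis using 2 empty_notin_dedges[of r] by simp
next
  case 3
  then show ?thesis using assms dts_subset_dverts[of r] by auto
qed

lemma dedges_TrueTwin_crossing:
  assumes "wf_dtree (Node TrueTwin l r)" "e \<in> dedges (Node TrueTwin l r)"
    and "\<not> e \<subseteq> dverts l" "\<not> e \<subseteq> dverts r"
  obtains u w where "e = {u, w}" "u \<in> dts l" "w \<in> dts r" "e \<inter> dverts l = {u}"
proof -
  from assms(2) obtain u w where "e = {u, w}" "u \<in> dts l" "w \<in> dts r"
    by (cases rule: dedges_TrueTwinE) (use assms dedges_subset_dverts in blast)+
  moreover have "e \<inter> dverts l = {u}"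
    using calculation assms(1) dts_subset_dverts[of l] dts_subset_dverts[of r] by auto
  ultimately show thesis by (rule that)
qed

lemma closed_nbhd_TrueTwin_left:
  assumes wf: "wf_dtree (Node TrueTwin l r)" and x: "x \<in> dverts l - dts l"
  shows "x \<in> closed_nbhd (dedges (Node TrueTwin l r)) S \<longleftrightarrow>
         x \<in> closed_nbhd (dedges l) (S \<inter> dverts l)"
proof
  assume "x \<in> closed_nbhd (dedges (Node TrueTwin l r)) S"
  then consider "x \<in> S" | y where "y \<in> S" "{x, y} \<in> dedges (Node TrueTwin l r)"
    unfolding closed_nbhd_def by blast
  then show "x \<in> closed_nbhd (dedges l) (S \<inter> dverts l)"
  proof cases
    case 1
    then show ?thesis using x unfolding closed_nbhd_def by blast
  next
    case 2
    have "x \<notin> dverts r" using x wf by auto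
    have "{x, y} \<in> dedges l"
      using 2(2) \<open>x \<notin> dverts r\<close> x dts_subset_dverts[of r] dedges_subset_dverts[of "{x, y}" r]
      by (cases rule: dedges_TrueTwinE) (auto simp: doubleton_eq_iff)
    then show ?thesis
      using 2(1) dedges_subset_dverts[of "{x, y}" l] unfolding closed_nbhd_def by blast
  qed
qed (auto simp: closed_nbhd_def)

lemma dominated_TrueTwin_iff:
  assumes wf: "wf_dtree (Node TrueTwin l r)"
  shows "dverts (Node TrueTwin l r) - dts (Node TrueTwin l r)
           \<subseteq> closed_nbhd (dedges (Node TrueTwin l r)) S \<longleftrightarrow>
         dverts l - dts l \<subseteq> closed_nbhd (dedges l) (S \<inter> dverts l) \<and>
         dverts r - dts r \<subseteq> closed_nbhd (dedges r) (S \<inter> dverts r)"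
proof -
  have wf': "wf_dtree (Node TrueTwin r l)" using wf TrueTwin_swap(4) by blast
  have "dverts (Node TrueTwin l r) - dts (Node TrueTwin l r) = (dverts l - dts l) \<union> (dverts r - dts r)"
    using wf dts_subset_dverts[of l] dts_subset_dverts[of r] by auto
  then show ?thesis
    using closed_nbhd_TrueTwin_left[OF wf, of _ S] closed_nbhd_TrueTwin_left[OF wf', of _ S]
    unfolding TrueTwin_swap(1)[of r l] by blast
qed

lemma k_feasible_le_card_dts: "k_feasible k u S \<Longrightarrow> k \<le> card (dts u)"
  unfolding k_feasible_def by (metis card_mono finite_dts le_inf_iff)

lemma k_feasible_0_iff:
  "k_feasible 0 u S \<longleftrightarrow> S \<subseteq> dverts u \<and> dverts u - dts u \<subseteq> closed_nbhd (dedges u) S \<and>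
     has_perfect_matching S (induced_edges (dedges u) S)"
  unfolding k_feasible_def
  by (metis Diff_empty card_0_eq empty_subsetI finite_dts finite_subset le_inf_iff)

lemma perfect_matching_TrueTwin_restrict_left:
  assumes wf: "wf_dtree (Node TrueTwin l r)"
    and M: "M \<subseteq> dedges (Node TrueTwin l r)" "disjoint M" "\<Union>M = S"
  defines "C \<equiv> {e \<in> M. \<not> e \<subseteq> dverts l \<and> \<not> e \<subseteq> dverts r}"
  shows "\<exists>X \<subseteq> S \<inter> dts l. card X = card C \<and>
           has_perfect_matching (S \<inter> dverts l - X) (induced_edges (dedges l) (S \<inter> dverts l - X))"
proof -
  define X where "X = \<Union>(M - Pow (dverts l)) \<inter> dverts l"
  have "dverts l \<inter> dverts r = {}" using wf by simp
  then have X_eq: "X = \<Union>C \<inter> dverts l"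
    unfolding X_def C_def by blast
  have crossing: "card (e \<inter> dverts l) = 1 \<and> e \<inter> dverts l \<subseteq> dts l" if "e \<in> C" for e
  proof -
    have "e \<in> dedges (Node TrueTwin l r)" "\<not> e \<subseteq> dverts l" "\<not> e \<subseteq> dverts r"
      using that M(1) unfolding C_def by auto
    then obtain u where "u \<in> dts l" "e \<inter> dverts l = {u}"
      by (rule dedges_TrueTwin_crossing[OF wf])
    then show ?thesis by simp
  qed
  have "C \<subseteq> M" unfolding C_def by blast
  have "C \<subseteq> Pow (dverts (Node TrueTwin l r))"
    using \<open>C \<subseteq> M\<close> M(1) dedges_subset_dverts by blast
  then have "finite C"
    by (rule finite_subset) (simp add: finite_dverts)
  then have "card X = card C"
    unfolding X_eq
    by (rule card_Union_Int_eq_card) (use crossing pairwise_subset[OF M(2) \<open>C \<subseteq> M\<close>] in auto)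
  moreover have "X \<subseteq> S \<inter> dts l"
    unfolding X_eq using crossing \<open>C \<subseteq> M\<close> M(3) by blast
  moreover have "M \<inter> Pow (dverts l) \<subseteq> dedges l"
    using M(1) dedges_TrueTwin_inside_left[OF wf] by blast
  moreover have "disjoint (M \<inter> Pow (dverts l))"
    using pairwise_subset[OF M(2)] by blast
  moreover have "\<Union>(M \<inter> Pow (dverts l)) = S \<inter> dverts l - X"
    using Union_matching_Int_Pow[OF M(2,3)] unfolding X_def by blast
  ultimately show ?thesis
    unfolding has_perfect_matching_induced_iff
    by (intro exI[of _ X] exI[of _ "M \<inter> Pow (dverts l)"] conjI)
qed

lemma k_feasible_TrueTwin_split:
  assumes wf: "wf_dtree (Node TrueTwin l r)" and S: "k_feasible 0 (Node TrueTwin l r) S"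
  obtains i where "k_feasible i l (S \<inter> dverts l)" "k_feasible i r (S \<inter> dverts r)"
proof -
  obtain M where M: "M \<subseteq> dedges (Node TrueTwin l r)" "disjoint M" "\<Union>M = S"
    using S unfolding k_feasible_0_iff has_perfect_matching_induced_iff by blast
  have dom: "dverts l - dts l \<subseteq> closed_nbhd (dedges l) (S \<inter> dverts l)"
    "dverts r - dts r \<subseteq> closed_nbhd (dedges r) (S \<inter> dverts r)"
    using S unfolding k_feasible_0_iff dominated_TrueTwin_iff[OF wf] by simp_all
  define C where "C = {e \<in> M. \<not> e \<subseteq> dverts l \<and> \<not> e \<subseteq> dverts r}"
  have "\<exists>X \<subseteq> S \<inter> dts l. card X = card C \<and>
      has_perfect_matching (S \<inter> dverts l - X) (induced_edges (dedges l) (S \<inter> dverts l - X))"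
    using perfect_matching_TrueTwin_restrict_left[OF wf M] unfolding C_def .
  then have "k_feasible (card C) l (S \<inter> dverts l)"
    unfolding k_feasible_def using dom(1) dts_subset_dverts[of l] by (simp add: Int_assoc Int_absorb1)
  moreover have "\<exists>X \<subseteq> S \<inter> dts r. card X = card C \<and>
      has_perfect_matching (S \<inter> dverts r - X) (induced_edges (dedges r) (S \<inter> dverts r - X))"
  proof -
    have "wf_dtree (Node TrueTwin r l)" "M \<subseteq> dedges (Node TrueTwin r l)"
      using wf M(1) unfolding TrueTwin_swap[of l r] by simp_all
    moreover have "C = {e \<in> M. \<not> e \<subseteq> dverts r \<and> \<not> e \<subseteq> dverts l}"
      unfolding C_def by blast
    ultimately show ?thesis
      using perfect_matching_TrueTwin_restrict_left[of r l M S] M(2,3) by simp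
  qed
  then have "k_feasible (card C) r (S \<inter> dverts r)"
    unfolding k_feasible_def using dom(2) dts_subset_dverts[of r] by (simp add: Int_assoc Int_absorb1)
  ultimately show thesis by (rule that)
qed

lemma perfect_matching_TrueTwin_glue:
  assumes wf: "wf_dtree (Node TrueTwin l r)"
    and "Sl \<subseteq> dverts l" "Sr \<subseteq> dverts r"
    and Xl: "Xl \<subseteq> Sl \<inter> dts l" and Xr: "Xr \<subseteq> Sr \<inter> dts r" and "card Xl = card Xr"
    and "has_perfect_matching (Sl - Xl) (induced_edges (dedges l) (Sl - Xl))"
    and "has_perfect_matching (Sr - Xr) (induced_edges (dedges r) (Sr - Xr))"
  shows "has_perfect_matching (Sl \<union> Sr) (induced_edges (dedges (Node TrueTwin l r)) (Sl \<union> Sr))"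
proof -
  have disj: "dverts l \<inter> dverts r = {}" using wf by simp
  obtain Ml where Ml: "Ml \<subseteq> dedges l" "disjoint Ml" "\<Union>Ml = Sl - Xl"
    using assms(7) unfolding has_perfect_matching_induced_iff by blast
  obtain Mr where Mr: "Mr \<subseteq> dedges r" "disjoint Mr" "\<Union>Mr = Sr - Xr"
    using assms(8) unfolding has_perfect_matching_induced_iff by blast
  obtain f where f: "bij_betw f Xl Xr"
    using Xl Xr \<open>card Xl = card Xr\<close> finite_dts by (metis bij_betw_iff_card finite_subset le_inf_iff)
  define P where "P = (\<lambda>x. {x, f x}) ` Xl"
  have "Xl \<inter> Xr = {}" using Xl Xr assms(2,3) disj by blast
  then have P: "disjoint P" "\<Union>P = Xl \<union> Xr"
    unfolding P_def using disjoint_pairs_bij_betw[OF f] by blast+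
  have "P \<subseteq> {{u, w} |u w. u \<in> dts l \<and> w \<in> dts r}"
    using Xl Xr bij_betwE[OF f] unfolding P_def by blast
  then have "Ml \<union> Mr \<union> P \<subseteq> dedges (Node TrueTwin l r)"
    using Ml(1) Mr(1) by auto
  moreover have "disjoint (Ml \<union> Mr \<union> P)"
  proof (intro disjoint_union)
    show "\<Union>Ml \<inter> \<Union>Mr = {}"
      using Ml(3) Mr(3) assms(2,3) disj by blast
    show "\<Union>(Ml \<union> Mr) \<inter> \<Union>P = {}"
      using Ml(3) Mr(3) P(2) Xl Xr assms(2,3) disj by blast
  qed (use Ml(2) Mr(2) P(1) in auto)
  moreover have "\<Union>(Ml \<union> Mr \<union> P) = Sl \<union> Sr"
    using Ml(3) Mr(3) P(2) Xl Xr by auto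
  ultimately show ?thesis
    unfolding has_perfect_matching_induced_iff by blast
qed

lemma k_feasible_TrueTwin_union:
  assumes wf: "wf_dtree (Node TrueTwin l r)"
    and Sl: "k_feasible i l Sl" and Sr: "k_feasible i r Sr"
  shows "k_feasible 0 (Node TrueTwin l r) (Sl \<union> Sr)"
proof -
  have "Sl \<subseteq> dverts l" "Sr \<subseteq> dverts r" using Sl Sr unfolding k_feasible_def by blast+
  obtain Xl where Xl: "Xl \<subseteq> Sl \<inter> dts l" "card Xl = i"
    "has_perfect_matching (Sl - Xl) (induced_edges (dedges l) (Sl - Xl))"
    using Sl unfolding k_feasible_def by blast
  obtain Xr where Xr: "Xr \<subseteq> Sr \<inter> dts r" "card Xr = i"
    "has_perfect_matching (Sr - Xr) (induced_edges (dedges r) (Sr - Xr))"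
    using Sr unfolding k_feasible_def by blast
  have "has_perfect_matching (Sl \<union> Sr) (induced_edges (dedges (Node TrueTwin l r)) (Sl \<union> Sr))"
    using perfect_matching_TrueTwin_glue[OF wf \<open>Sl \<subseteq> dverts l\<close> \<open>Sr \<subseteq> dverts r\<close>] Xl Xr
    by simp
  moreover have "(Sl \<union> Sr) \<inter> dverts l = Sl" "(Sl \<union> Sr) \<inter> dverts r = Sr"
    using \<open>Sl \<subseteq> dverts l\<close> \<open>Sr \<subseteq> dverts r\<close> wf by auto
  then have "dverts (Node TrueTwin l r) - dts (Node TrueTwin l r)
      \<subseteq> closed_nbhd (dedges (Node TrueTwin l r)) (Sl \<union> Sr)"
    unfolding dominated_TrueTwin_iff[OF wf] using Sl Sr unfolding k_feasible_def by simp
  ultimately show ?thesis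
    unfolding k_feasible_0_iff using \<open>Sl \<subseteq> dverts l\<close> \<open>Sr \<subseteq> dverts r\<close> by auto
qed

lemma gamma_le_card: "k_feasible k u S \<Longrightarrow> gamma k u \<le> enat (card S)"
  unfolding gamma_def by (auto intro: INF_lower)

lemma gamma_attained:
  assumes "gamma k u \<noteq> \<infinity>"
  obtains S where "k_feasible k u S" "gamma k u = enat (card S)"
proof -
  let ?A = "(\<lambda>S. enat (card S)) ` {S. k_feasible k u S}"
  have "?A \<noteq> {}" using assms unfolding gamma_def by (metis Inf_empty top_enat_def)
  then have "Inf ?A \<in> ?A" by (metis all_not_in_conv wellorder_InfI)
  then show thesis using that unfolding gamma_def by auto
qed

lemma gamma_0_TrueTwin_le:
  assumes wf: "wf_dtree (Node TrueTwin l r)"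
  shows "gamma 0 (Node TrueTwin l r) \<le> gamma i l + gamma i r"
proof (cases "gamma i l = \<infinity> \<or> gamma i r = \<infinity>")
  case False
  then obtain Sl Sr where Sl: "k_feasible i l Sl" "gamma i l = enat (card Sl)"
    and Sr: "k_feasible i r Sr" "gamma i r = enat (card Sr)"
    using gamma_attained by metis
  have "gamma 0 (Node TrueTwin l r) \<le> enat (card (Sl \<union> Sr))"
    by (rule gamma_le_card[OF k_feasible_TrueTwin_union[OF wf Sl(1) Sr(1)]])
  also have "\<dots> \<le> gamma i l + gamma i r"
    using Sl(2) Sr(2) card_Un_le[of Sl Sr] by simp
  finally show ?thesis .
qed auto

lemma gamma_0_TrueTwin_ge:
  assumes wf: "wf_dtree (Node TrueTwin l r)"
  obtains i where "i \<le> card (dts l)" "i \<le> card (dts r)"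
    "gamma i l + gamma i r \<le> gamma 0 (Node TrueTwin l r)"
proof (cases "gamma 0 (Node TrueTwin l r) = \<infinity>")
  case True
  then show thesis by (intro that[of 0]) simp_all
next
  case False
  then obtain S where S: "k_feasible 0 (Node TrueTwin l r) S"
    "gamma 0 (Node TrueTwin l r) = enat (card S)"
    by (rule gamma_attained)
  then obtain i where Sl: "k_feasible i l (S \<inter> dverts l)" and Sr: "k_feasible i r (S \<inter> dverts r)"
    using k_feasible_TrueTwin_split[OF wf] by blast
  have "S = (S \<inter> dverts l) \<union> (S \<inter> dverts r)" "(S \<inter> dverts l) \<inter> (S \<inter> dverts r) = {}"
    using S(1) wf unfolding k_feasible_def by auto
  then have "card S = card (S \<inter> dverts l) + card (S \<inter> dverts r)"
    by (metis card_Un_disjoint finite_Int finite_dverts)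
  then have "gamma i l + gamma i r \<le> gamma 0 (Node TrueTwin l r)"
    using S(2) add_mono[OF gamma_le_card[OF Sl] gamma_le_card[OF Sr]] by simp
  then show thesis
    by (rule that[OF k_feasible_le_card_dts[OF Sl] k_feasible_le_card_dts[OF Sr]])
qed

lemma gamma_0_TrueTwin:
  assumes wf: "wf_dtree (Node TrueTwin l r)"
  shows "gamma 0 (Node TrueTwin l r) =
         (MIN i \<in> {0..min (card (dts l)) (card (dts r))}. gamma i l + gamma i r)"
proof (rule antisym)
  show "gamma 0 (Node TrueTwin l r) \<le>
      (MIN i \<in> {0..min (card (dts l)) (card (dts r))}. gamma i l + gamma i r)"
    using gamma_0_TrueTwin_le[OF wf] by (intro Min.boundedI) auto
next
  obtain i where "i \<le> card (dts l)" "i \<le> card (dts r)"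
    and "gamma i l + gamma i r \<le> gamma 0 (Node TrueTwin l r)"
    by (rule gamma_0_TrueTwin_ge[OF wf])
  then show "(MIN i \<in> {0..min (card (dts l)) (card (dts r))}. gamma i l + gamma i r) \<le>
      gamma 0 (Node TrueTwin l r)"
    by (intro Min.coboundedI[THEN order_trans]) auto
qed

theorem lemma11:
  fixes T :: "'a dtree" and V :: "'a set" and E :: "'a set set"
    and vl vr :: "'a dtree"
  assumes "is_decomposition_tree T V E"
    and "distance_hereditary V E"
    and "Node TrueTwin vl vr \<in> subtrees T"
    and "property_P vl" and "property_P vr"
  shows "gamma 0 (Node TrueTwin vl vr) =
         (MIN i \<in> {0..min (card (dts vl)) (card (dts vr))}. gamma i vl + gamma i vr)"
proof -
  have "wf_dtree (Node TrueTwin vl vr)"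
    using assms(1,3) wf_dtree_subtree unfolding is_decomposition_tree_def by blast
  then show ?thesis by (rule gamma_0_TrueTwin)
qed

end
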